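(* Let $p$ be a prime, $n\in\mathbb N$, and $G=C_{p^n}$. Consider the monotone map $(\mathfrak R,\nabla):\mathrm{wIndSys}^{uni}_{G}\to\mathrm{Transf}_G\times\mathrm{Fam}_G$ (whose target is isomorphic to $K_{n+2}\times[n+2]$). For a transfer system $R$ and family $\mathcal F$, the fiber satisfies $\mathfrak R^{-1}(R)\cap\nabla^{-1}(\mathcal F)=\emptyset$ if $\mathrm{Domain}(R)\not\subseteq\mathcal F$; it is a single point if $\mathrm{Codomain}(R)\subseteq\mathcal F$; and it is isomorphic to the poset $\mathrm{Sieve}_R(\mathrm{Codomain}(R)-\mathcal F)$ otherwise. Moreover, the map from $\mathrm{wIndSys}^{uni}_G$ onto its image is a cocartesian fibration of posets, with cocartesian transport along $R\le R'$ (fixed $\mathcal F$) given by the map $\mathrm{Sieve}_R(\mathrm{Codomain}(R)-\mathcal F)\to\mathrm{Sieve}_{R'}(\mathrm{Codomain}(R')-\mathcal F)$ sending $\mathfrak S\mapsto R^{\simeq}\cup\{(J\subseteq H)\mid J\subseteq K\subsetneq H,\ (J\subseteq K)\in R',\ (K\subsetneq H)\in\mathfrak S\}$, and cocartesian transport along $\mathcal F\le\mathcal F'$ (fixed $R$) given by the restriction map $\mathrm{Sieve}_R(\mathrm{Codomain}(R)-\mathcal F)\to\mathrm{Sieve}_R(\mathrm{Codomain}(R)-\mathcal F')$.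
   Context: Let $G=C_{p^n}$ with subgroups $e=C_1\subset C_p\subset\cdots\subset C_{p^n}$ and $\mathcal O_G$ its orbit category; finite $G$-sets are $\mathbb F_G$, and for $H\le G$, $\mathbb F_H$ denotes finite $H$-sets, $*_H$ the one-point $H$-set, $\emptyset_H$ the empty one. A (unital) $G$-weak indexing system is an assignment $H\mapsto \mathcal C_H\subseteq\mathbb F_H$ of isomorphism-closed classes, stable under restriction to subgroups, such that $*_H\in\mathcal C_H$ for all $H$, $\mathcal C$ is closed under self-indexed coproducts ($S\in\mathcal C_H$ and $T_x\in\mathcal C_{K}$ for each orbit $[H/K]\subseteq S$ imply $\coprod \mathrm{Ind}_K^HT_x\in\mathcal C_H$), and $S\sqcup S'\in\mathcal C_H$ implies $S,S'\in\mathcal C_H$. $\mathrm{wIndSys}^{uni}_G$ is the poset of these under inclusion. A $G$-family is a set of subgroups closed under passage to subgroups; $\mathrm{Fam}_G$ is their poset ($\cong[n+2]$, a total order with $n+2$ elements). A $G$-transfer system is a partial order $R$ on subgroups refining inclusion (pairs $K\subseteq H$), reflexive, transitive, and closed under restriction: $(K\subseteq H)\in R$ and $L\le H$ imply $(K\cap L\subseteq L)\in R$; $\mathrm{Transf}_G$ is their poset under inclusion ($\cong$ the associahedron $K_{n+2}$), and $R^{\simeq}$ denotes the identity pairs $H\subseteq H$. $\mathfrak R(\mathcal C)=\{K\subseteq H\mid [H/K]\in\mathcal C_H\}$ and $\nabla(\mathcal C)=\{H\mid 2\cdot *_H\in\mathcal C_H\}$. $\mathrm{Domain}(R)=\{L\mid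 L\le K\text{ for some }(K\subsetneq H)\in R\}$ and $\mathrm{Codomain}(R)=\{L\mid L\le H\text{ for some }(K\subsetneq H)\in R\}$. For a set $\mathcal C$ of subgroups, $\mathrm{Sieve}_R(\mathcal C)$ is the poset (under inclusion) of sets $\mathfrak S\subseteq R$ of pairs such that: (b) if $(K\subseteq H)\in\mathfrak S$ and $L\le H$ with $L\in\mathcal C$ then $(L\cap K\subseteq L)\in\mathfrak S$; (c) if $(K\subseteq H)\in\mathfrak S$ then $H\in\mathcal C$; (d) if $(J\subseteq K)\in R$ and $(K\subsetneq H)\in\mathfrak S$ then $(J\subseteq H)\in\mathfrak S$. A monotone map $\pi:P\to Q$ is a cocartesian fibration if for all $q\le q'$ and $x\in\pi^{-1}(q)$ there is $t_q^{q'}x\in\pi^{-1}(q')$ with: for all $y$ with $q'\le\pi(y)$, $x\le y\iff t_q^{q'}x\le y$; the map $t_q^{q'}$ is called cocartesian transport. *)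

theory Defs
  imports Main "HOL-Library.Multiset" "HOL-Computational_Algebra.Primes"
begin

text \<open>G = C_{p^n}. The subgroup C_{p^k} (0 <= k <= n) is encoded by the natural number k;
 inclusion of subgroups is <=, intersection is min.
 A finite H-set for H = C_{p^h}, up to isomorphism, is encoded as the multiset of the
 orbit types of its orbits: the number k (k <= h) stands for an orbit H/C_{p^k}.
 Thus the one-point H-set is {#h#}, the orbit [H/K] for K = C_{p^k} is {#k#}, 2*H is {#h,h#},
 disjoint union is multiset sum and induction Ind_K^H leaves the multiset unchanged.\<close>

definition hset :: "nat \<Rightarrow> nat multiset set" where
  "hset h = {S. set_mset S \<subseteq> {..h}}"

text \<open>Restriction from C_{p^h} to C_{p^l}: the orbit C_{p^h}/C_{p^k} restricts to
 p^(h - max l k) copies of the orbit C_{p^l}/C_{p^(min l k)}.\<close>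
definition res :: "nat \<Rightarrow> nat \<Rightarrow> nat \<Rightarrow> nat multiset \<Rightarrow> nat multiset" where
  "res p h l S = sum_mset (image_mset (\<lambda>k. replicate_mset (p ^ (h - max l k)) (min l k)) S)"

definition ind :: "nat multiset \<Rightarrow> nat multiset" where
  "ind T = T"

definition wIndSys :: "nat \<Rightarrow> nat \<Rightarrow> (nat \<Rightarrow> nat multiset set) set" where
  "wIndSys p n = {C.
     (\<forall>h. n < h \<longrightarrow> C h = {}) \<and>
     (\<forall>h\<le>n. C h \<subseteq> hset h) \<and>
     (\<forall>h l S. h \<le> n \<longrightarrow> l \<le> h \<longrightarrow> S \<in> C h \<longrightarrow> res p h l S \<in> C l) \<and>
     (\<forall>h\<le>n. {#h#} \<in> C h) \<and>
     (\<forall>h xs. h \<le> n \<longrightarrow> mset (map fst xs) \<in> C h \<longrightarrow> (\<forall>(k, T)\<in>set xs. T \<in> C k)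
          \<longrightarrow> sum_list (map (\<lambda>(k, T). ind T) xs) \<in> C h) \<and>
     (\<forall>h S S'. h \<le> n \<longrightarrow> S + S' \<in> C h \<longrightarrow> S \<in> C h \<and> S' \<in> C h)}"

text \<open>Transfer systems: a pair (k,h) means C_{p^k} \<subseteq> C_{p^h}.\<close>
definition idR :: "nat \<Rightarrow> (nat \<times> nat) set" where
  "idR n = {(h, h) | h. h \<le> n}"

definition transf :: "nat \<Rightarrow> (nat \<times> nat) set set" where
  "transf n = {R. R \<subseteq> {(k, h). k \<le> h \<and> h \<le> n} \<and> idR n \<subseteq> R \<and> trans R \<and>
     (\<forall>k h l. (k, h) \<in> R \<longrightarrow> l \<le> h \<longrightarrow> (min k l, l) \<in> R)}"

definition fam :: "nat \<Rightarrow> nat set set" where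
  "fam n = {F. F \<subseteq> {..n} \<and> (\<forall>h\<in>F. \<forall>k\<le>h. k \<in> F)}"

definition frakR :: "nat \<Rightarrow> (nat \<Rightarrow> nat multiset set) \<Rightarrow> (nat \<times> nat) set" where
  "frakR n C = {(k, h). k \<le> h \<and> h \<le> n \<and> {#k#} \<in> C h}"

definition nabla :: "nat \<Rightarrow> (nat \<Rightarrow> nat multiset set) \<Rightarrow> nat set" where
  "nabla n C = {h. h \<le> n \<and> {#h, h#} \<in> C h}"

definition Domain_tr :: "(nat \<times> nat) set \<Rightarrow> nat set" where
  "Domain_tr R = {l. \<exists>k h. (k, h) \<in> R \<and> k < h \<and> l \<le> k}"

definition Codomain_tr :: "(nat \<times> nat) set \<Rightarrow> nat set" where
  "Codomain_tr R = {l. \<exists>k h. (k, h) \<in> R \<and> k < h \<and> l \<le> h}"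

text \<open>Sieves (they contain R^\<simeq>, condition (c) concerns proper pairs).\<close>
definition Sieve :: "nat \<Rightarrow> (nat \<times> nat) set \<Rightarrow> nat set \<Rightarrow> (nat \<times> nat) set set" where
  "Sieve n R \<C> = {S. idR n \<subseteq> S \<and> S \<subseteq> R \<and>
     (\<forall>k h l. (k, h) \<in> S \<longrightarrow> l \<le> h \<longrightarrow> l \<in> \<C> \<longrightarrow> (min l k, l) \<in> S) \<and>
     (\<forall>k h. (k, h) \<in> S \<longrightarrow> k < h \<longrightarrow> h \<in> \<C>) \<and>
     (\<forall>j k h. (j, k) \<in> R \<longrightarrow> (k, h) \<in> S \<longrightarrow> k < h \<longrightarrow> (j, h) \<in> S)}"

definition transportR :: "nat \<Rightarrow> (nat \<times> nat) set \<Rightarrow> (nat \<times> nat) set \<Rightarrow> (nat \<times> nat) set" where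
  "transportR n R' S = idR n \<union> {(j, h). \<exists>k. j \<le> k \<and> k < h \<and> (j, k) \<in> R' \<and> (k, h) \<in> S}"

definition restrictS :: "nat \<Rightarrow> nat set \<Rightarrow> (nat \<times> nat) set \<Rightarrow> (nat \<times> nat) set" where
  "restrictS n \<C>' S = idR n \<union> {(k, h). (k, h) \<in> S \<and> h \<in> \<C>'}"

definition fib :: "nat \<Rightarrow> nat \<Rightarrow> (nat \<times> nat) set \<Rightarrow> nat set \<Rightarrow> (nat \<Rightarrow> nat multiset set) set" where
  "fib p n R F = {C \<in> wIndSys p n. frakR n C = R \<and> nabla n C = F}"

definition leTF :: "(nat \<times> nat) set \<times> nat set \<Rightarrow> (nat \<times> nat) set \<times> nat set \<Rightarrow> bool" where
  "leTF a b \<longleftrightarrow> fst a \<subseteq> fst b \<and> snd a \<subseteq> snd b"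

definition cocart_lift :: "'a set \<Rightarrow> ('a \<Rightarrow> 'a \<Rightarrow> bool) \<Rightarrow> ('b \<Rightarrow> 'b \<Rightarrow> bool) \<Rightarrow> ('a \<Rightarrow> 'b)
     \<Rightarrow> 'a \<Rightarrow> 'b \<Rightarrow> 'a \<Rightarrow> bool" where
  "cocart_lift P leP leQ \<pi> x q' t \<longleftrightarrow> t \<in> P \<and> \<pi> t = q' \<and>
     (\<forall>y\<in>P. leQ q' (\<pi> y) \<longrightarrow> (leP x y \<longleftrightarrow> leP t y))"

definition cocart_fib :: "'a set \<Rightarrow> ('a \<Rightarrow> 'a \<Rightarrow> bool) \<Rightarrow> 'b set \<Rightarrow> ('b \<Rightarrow> 'b \<Rightarrow> bool) \<Rightarrow> ('a \<Rightarrow> 'b) \<Rightarrow> bool" where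
  "cocart_fib P leP Q leQ \<pi> \<longleftrightarrow> (\<forall>x\<in>P. \<pi> x \<in> Q) \<and>
     (\<forall>x\<in>P. \<forall>y\<in>P. leP x y \<longrightarrow> leQ (\<pi> x) (\<pi> y)) \<and>
     (\<forall>q\<in>Q. \<forall>q'\<in>Q. leQ q q' \<longrightarrow> (\<forall>x\<in>P. \<pi> x = q \<longrightarrow> (\<exists>t. cocart_lift P leP leQ \<pi> x q' t)))"

end

theory Submission
  imports Defs
begin

text \<open>A weak indexing system C is determined by its transfers R, its fold maps F and, at the
  levels h outside F, by the proper orbits that may sit next to a single fixed point. At a level
  in F the admissible sets are closed under sums, so they are just the sets of admissible orbits;
  outside F an admissible set has at most one fixed point. The crucial step is that a set of
  admissible proper orbits is itself admissible: restricting its largest orbit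
  C_{p^h}/C_{p^k} to C_{p^k} yields p^(h-k) >= 2 fixed points, so k lies in F, every orbit of
  the set restricts to an admissible C_{p^k}-set, and the set is a self-indexed coproduct over
  that one orbit. The same restriction shows that Domain(R) lies in F. Conversely every sieve of R
  over Codomain(R) - F is realised by a weak indexing system, which identifies the fibre over
  (R, F) with the poset of such sieves. A cocartesian lift of C along (R, F) <= (R', F') is the
  system of the sieve of C pushed forward along R' and cut down to the levels outside F': it is
  the least system over (R', F') containing C.\<close>

section \<open>Orbit multisets and restriction\<close>

lemma res_empty [simp]: "res p h l {#} = {#}"
  by (simp add: res_def)

lemma res_add_mset [simp]:
  "res p h l (add_mset k M) = replicate_mset (p ^ (h - max l k)) (min l k) + res p h l M"
  by (simp add: res_def)

lemma mem_res_iff: "0 < p \<Longrightarrow> j \<in># res p h l M \<longleftrightarrow> (\<exists>k\<in>#M. j = min l k)"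
  by (induction M) auto

lemma count_res_self:
  assumes "l \<le> h" and "\<forall>k\<in>#M. l \<le> k \<longrightarrow> k = h"
  shows "count (res p h l M) l = count M h"
  using assms(2)
proof (induction M)
  case (add k M)
  then show ?case
    using assms(1) by (cases "l \<le> k") (auto simp: max_def min_def)
qed simp

lemma double_subseteq_mset: "2 \<le> count M x \<Longrightarrow> {#x, x#} \<subseteq># M"
  by (metis count_le_replicate_mset_subset_eq numeral_2_eq_2 replicate_mset_0 replicate_mset_Suc)

lemma pair_subseteq_mset: "h \<in># M \<Longrightarrow> k \<in># M \<Longrightarrow> h \<noteq> k \<Longrightarrow> {#h, k#} \<subseteq># M"
  by (metis insert_noteq_member mset_add mset_subset_eq_add_mset_cancel single_subset_iff)

section \<open>Admissible sets of a weak indexing system\<close>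

lemma wIndSys_above: "C \<in> wIndSys p n \<Longrightarrow> n < h \<Longrightarrow> C h = {}"
  unfolding wIndSys_def by blast

lemma wIndSys_level_le: "C \<in> wIndSys p n \<Longrightarrow> M \<in> C h \<Longrightarrow> h \<le> n"
  using wIndSys_above by (metis empty_iff not_le)

lemma wIndSys_orbit_le:
  assumes "C \<in> wIndSys p n" "M \<in> C h" "k \<in># M"
  shows "k \<le> h"
proof -
  have "C h \<subseteq> hset h"
    using assms(1) wIndSys_level_le[OF assms(1,2)] unfolding wIndSys_def by blast
  then show ?thesis using assms(2,3) by (auto simp: hset_def)
qed

lemma wIndSys_point: "C \<in> wIndSys p n \<Longrightarrow> h \<le> n \<Longrightarrow> {#h#} \<in> C h"
  unfolding wIndSys_def by blast

lemma wIndSys_res: "C \<in> wIndSys p n \<Longrightarrow> M \<in> C h \<Longrightarrow> l \<le> h \<Longrightarrow> res p h l M \<in> C l"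
  using wIndSys_level_le[of C p n M h] unfolding wIndSys_def by blast

lemma wIndSys_subset:
  assumes "C \<in> wIndSys p n" "N \<in> C h" "M \<subseteq># N"
  shows "M \<in> C h"
proof -
  have "M + (N - M) \<in> C h" using assms(2,3) by simp
  then show ?thesis
    using assms(1) wIndSys_level_le[OF assms(1,2)] unfolding wIndSys_def by blast
qed

lemma wIndSys_coprod:
  assumes "C \<in> wIndSys p n" "mset (map fst xs) \<in> C h" "\<forall>(k, T)\<in>set xs. T \<in> C k"
  shows "sum_list (map snd xs) \<in> C h"
proof -
  have "sum_list (map (\<lambda>(k, T). ind T) xs) \<in> C h"
    using assms wIndSys_level_le[OF assms(1,2)] unfolding wIndSys_def by blast
  moreover have "map (\<lambda>(k, T). ind T) xs = map snd xs" by (auto simp: ind_def)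
  ultimately show ?thesis by simp
qed

lemma wIndSys_orbit: "C \<in> wIndSys p n \<Longrightarrow> M \<in> C h \<Longrightarrow> k \<in># M \<Longrightarrow> {#k#} \<in> C h"
  by (meson wIndSys_subset single_subset_iff)

lemma wIndSys_empty: "C \<in> wIndSys p n \<Longrightarrow> h \<le> n \<Longrightarrow> {#} \<in> C h"
  by (meson wIndSys_point wIndSys_subset empty_le)

lemma wIndSys_orbit_trans: "C \<in> wIndSys p n \<Longrightarrow> {#j#} \<in> C k \<Longrightarrow> {#k#} \<in> C h \<Longrightarrow> {#j#} \<in> C h"
  using wIndSys_coprod[of C p n "[(k, {#j#})]" h] by simp

lemma wIndSys_pair_trans:
  assumes "C \<in> wIndSys p n" "{#h, k#} \<in> C h" "{#j#} \<in> C k"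
  shows "{#h, j#} \<in> C h"
  using wIndSys_coprod[OF assms(1), of "[(h, {#h#}), (k, {#j#})]" h] assms
    wIndSys_point[OF assms(1) wIndSys_level_le[OF assms(1,2)]] by (simp add: add_mset_commute)

lemma wIndSys_add:
  "C \<in> wIndSys p n \<Longrightarrow> {#h, h#} \<in> C h \<Longrightarrow> M \<in> C h \<Longrightarrow> N \<in> C h \<Longrightarrow> M + N \<in> C h"
  using wIndSys_coprod[of C p n "[(h, M), (h, N)]" h] by simp

lemma wIndSys_all_orbits:
  assumes "C \<in> wIndSys p n" "{#h, h#} \<in> C h" "\<forall>k\<in>#M. {#k#} \<in> C h"
  shows "M \<in> C h"
  using assms(3)
proof (induction M)
  case empty
  show ?case using wIndSys_empty[OF assms(1) wIndSys_level_le[OF assms(1,2)]] .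
next
  case (add k M)
  then show ?case using wIndSys_add[OF assms(1,2), of "{#k#}" M] by simp
qed

lemma wIndSys_res_orbit:
  assumes "C \<in> wIndSys p n" "0 < p" "{#k#} \<in> C h" "l \<le> h"
  shows "{#min l k#} \<in> C l"
  using wIndSys_orbit[OF assms(1) wIndSys_res[OF assms(1,3,4)]] assms(2) by simp

lemma wIndSys_res_double:
  "C \<in> wIndSys p n \<Longrightarrow> {#h, h#} \<in> C h \<Longrightarrow> k \<le> h \<Longrightarrow> {#k, k#} \<in> C k"
  using wIndSys_res[of C p n "{#h, h#}" h k] by (simp add: max_absorb2 min_absorb1)

lemma wIndSys_res_pair:
  assumes "C \<in> wIndSys p n" "0 < p" "{#h, k#} \<in> C h" "k \<le> l" "l \<le> h"
  shows "{#l, k#} \<in> C l"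
proof -
  have "res p h l {#h, k#} = add_mset l (replicate_mset (p ^ (h - l)) k)"
    using assms(4,5) by (simp add: max_def min_def)
  moreover have "{#l, k#} \<subseteq># add_mset l (replicate_mset (p ^ (h - l)) k)"
    using assms(2) by simp
  ultimately show ?thesis using wIndSys_res[OF assms(1,3,5)] wIndSys_subset[OF assms(1)] by metis
qed

text \<open>The only place where p > 1 is used.\<close>

lemma wIndSys_proper_orbit_double:
  assumes "1 < p" "C \<in> wIndSys p n" "{#k#} \<in> C h" "k < h"
  shows "{#k, k#} \<in> C k"
proof -
  have "p \<le> p ^ (h - k)" using assms(1,4) by (simp add: self_le_power)
  with assms(1) have "2 \<le> p ^ (h - k)" by linarith
  then have "{#k, k#} \<subseteq># res p h k {#k#}"
    using assms(4) by (simp add: double_subseteq_mset)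
  then show ?thesis using wIndSys_subset[OF assms(2) wIndSys_res[OF assms(2,3)]] assms(4) by simp
qed

lemma wIndSys_proper_orbits_at_Max:
  assumes "1 < p" "C \<in> wIndSys p n" "M \<noteq> {#}" "\<forall>k\<in>#M. k < h \<and> {#k#} \<in> C h"
  shows "M \<in> C (Max (set_mset M))"
proof -
  let ?k0 = "Max (set_mset M)"
  have "?k0 \<in># M" using assms(3) by simp
  then have k0: "{#?k0#} \<in> C h" "?k0 < h" using assms(4) by auto
  have "\<forall>k\<in>#M. {#k#} \<in> C ?k0"
  proof
    fix k assume "k \<in># M"
    then have "{#min ?k0 k#} \<in> C ?k0"
      using wIndSys_res_orbit[OF assms(2) less_trans[OF zero_less_one assms(1)], of k h ?k0]
        assms(4) k0(2) by simp
    then show "{#k#} \<in> C ?k0" using \<open>k \<in># M\<close> by (simp add: min_absorb2)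
  qed
  then show ?thesis
    using wIndSys_all_orbits[OF assms(2) wIndSys_proper_orbit_double[OF assms(1,2) k0]] by blast
qed

lemma wIndSys_proper_orbits:
  assumes "1 < p" "C \<in> wIndSys p n" "h \<le> n" "\<forall>k\<in>#M. k < h \<and> {#k#} \<in> C h"
  shows "M \<in> C h"
proof (cases "M = {#}")
  case True
  then show ?thesis using wIndSys_empty[OF assms(2,3)] by simp
next
  case False
  let ?k0 = "Max (set_mset M)"
  have "?k0 \<in># M" using False by simp
  then show ?thesis
    using wIndSys_coprod[OF assms(2), of "[(?k0, M)]" h] assms(4)
      wIndSys_proper_orbits_at_Max[OF assms(1,2) False assms(4)] by simp
qed

lemma wIndSys_point_add_proper_orbits:
  assumes "1 < p" "C \<in> wIndSys p n" "h \<le> n" "\<forall>k\<in>#M. k < h \<and> {#h, k#} \<in> C h"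
  shows "add_mset h M \<in> C h"
proof (cases "M = {#}")
  case True
  then show ?thesis using wIndSys_point[OF assms(2,3)] by simp
next
  case False
  let ?k0 = "Max (set_mset M)"
  have "?k0 \<in># M" using False by simp
  then have "{#h, ?k0#} \<in> C h" using assms(4) by blast
  moreover have "\<forall>k\<in>#M. k < h \<and> {#k#} \<in> C h"
    using assms(4) wIndSys_orbit[OF assms(2)] by fastforce
  ultimately show ?thesis
    using wIndSys_coprod[OF assms(2), of "[(h, {#h#}), (?k0, M)]" h] wIndSys_point[OF assms(2,3)]
      wIndSys_proper_orbits_at_Max[OF assms(1,2) False] by simp
qed

lemma wIndSys_memI:
  assumes "1 < p" "C \<in> wIndSys p n" "h \<le> n" "count M h \<le> 1"
    and "\<forall>k\<in>#M. k \<noteq> h \<longrightarrow> k < h \<and> {#k#} \<in> C h"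
    and "h \<in># M \<Longrightarrow> \<forall>k\<in>#M. k \<noteq> h \<longrightarrow> {#h, k#} \<in> C h"
  shows "M \<in> C h"
proof (cases "h \<in># M")
  case False
  then have "\<forall>k\<in>#M. k < h \<and> {#k#} \<in> C h" using assms(5) by metis
  then show ?thesis using wIndSys_proper_orbits[OF assms(1-3)] by blast
next
  case True
  then obtain M' where M: "M = add_mset h M'" by (metis multi_member_split)
  with assms(4) have "h \<notin># M'" by (simp add: not_in_iff)
  have "k < h \<and> {#h, k#} \<in> C h" if "k \<in># M'" for k
  proof -
    have "k \<noteq> h" "k \<in># M" using that \<open>h \<notin># M'\<close> M by auto
    then show ?thesis using assms(5) assms(6)[OF True] by blast
  qed
  then show ?thesis unfolding M by (intro wIndSys_point_add_proper_orbits[OF assms(1-3)] ballI)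
qed

section \<open>Transfer systems, families and sieves\<close>

lemma transf_le: "R \<in> transf n \<Longrightarrow> (k, h) \<in> R \<Longrightarrow> k \<le> h \<and> h \<le> n"
  by (auto simp: transf_def)

lemma transf_refl: "R \<in> transf n \<Longrightarrow> h \<le> n \<Longrightarrow> (h, h) \<in> R"
  by (auto simp: transf_def idR_def)

lemma transf_trans: "R \<in> transf n \<Longrightarrow> (j, k) \<in> R \<Longrightarrow> (k, h) \<in> R \<Longrightarrow> (j, h) \<in> R"
  by (auto simp: transf_def dest: transD)

lemma transf_restrict: "R \<in> transf n \<Longrightarrow> (k, h) \<in> R \<Longrightarrow> l \<le> h \<Longrightarrow> (min k l, l) \<in> R"
  by (simp add: transf_def)

lemma fam_downward: "F \<in> fam n \<Longrightarrow> h \<in> F \<Longrightarrow> k \<le> h \<Longrightarrow> k \<in> F"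
  by (auto simp: fam_def)

lemma fam_le: "F \<in> fam n \<Longrightarrow> h \<in> F \<Longrightarrow> h \<le> n"
  by (auto simp: fam_def)

lemma Domain_tr_subset_Codomain_tr: "Domain_tr R \<subseteq> Codomain_tr R"
  unfolding Domain_tr_def Codomain_tr_def by (auto 0 4 intro: less_imp_le order.trans)

lemma SieveI:
  assumes "idR n \<subseteq> S" "S \<subseteq> R"
    and "\<And>k h l. (k, h) \<in> S \<Longrightarrow> l \<le> h \<Longrightarrow> l \<in> X \<Longrightarrow> (min l k, l) \<in> S"
    and "\<And>k h. (k, h) \<in> S \<Longrightarrow> k < h \<Longrightarrow> h \<in> X"
    and "\<And>j k h. (j, k) \<in> R \<Longrightarrow> (k, h) \<in> S \<Longrightarrow> k < h \<Longrightarrow> (j, h) \<in> S"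
  shows "S \<in> Sieve n R X"
  using assms unfolding Sieve_def by blast

lemma Sieve_refl: "S \<in> Sieve n R X \<Longrightarrow> h \<le> n \<Longrightarrow> (h, h) \<in> S"
  by (auto simp: Sieve_def idR_def)

lemma Sieve_subset: "S \<in> Sieve n R X \<Longrightarrow> S \<subseteq> R"
  by (simp add: Sieve_def)

lemma Sieve_restrict:
  "S \<in> Sieve n R X \<Longrightarrow> (k, h) \<in> S \<Longrightarrow> l \<le> h \<Longrightarrow> l \<in> X \<Longrightarrow> (min l k, l) \<in> S"
  by (simp add: Sieve_def)

lemma Sieve_proper: "S \<in> Sieve n R X \<Longrightarrow> (k, h) \<in> S \<Longrightarrow> k < h \<Longrightarrow> h \<in> X"
  by (simp add: Sieve_def)

lemma Sieve_precomp: "S \<in> Sieve n R X \<Longrightarrow> (j, k) \<in> R \<Longrightarrow> (k, h) \<in> S \<Longrightarrow> k < h \<Longrightarrow> (j, h) \<in> S"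
  by (simp add: Sieve_def)

lemma Sieve_empty: "R \<in> transf n \<Longrightarrow> Sieve n R {} = {idR n}"
proof
  assume R: "R \<in> transf n"
  show "Sieve n R {} \<subseteq> {idR n}"
  proof
    fix S assume S: "S \<in> Sieve n R {}"
    have "S \<subseteq> idR n"
    proof
      fix x assume "x \<in> S"
      moreover obtain k h where "x = (k, h)" by fastforce
      ultimately show "x \<in> idR n"
        using transf_le[OF R] Sieve_subset[OF S] Sieve_proper[OF S] by (fastforce simp: idR_def)
    qed
    then show "S \<in> {idR n}" using S by (auto simp: Sieve_def)
  qed
  show "{idR n} \<subseteq> Sieve n R {}"
    using transf_refl[OF R] by (auto simp: idR_def intro!: SieveI)
qed

lemma frakR_in_transf: "C \<in> wIndSys p n \<Longrightarrow> 0 < p \<Longrightarrow> frakR n C \<in> transf n"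
  unfolding transf_def
proof (intro CollectI conjI allI impI)
  assume C: "C \<in> wIndSys p n" and p: "0 < p"
  show "frakR n C \<subseteq> {(k, h). k \<le> h \<and> h \<le> n}" by (auto simp: frakR_def)
  show "idR n \<subseteq> frakR n C" using wIndSys_point[OF C] by (auto simp: idR_def frakR_def)
  show "trans (frakR n C)"
    using wIndSys_orbit_trans[OF C] by (intro transI) (auto simp: frakR_def)
  show "(min k l, l) \<in> frakR n C" if "(k, h) \<in> frakR n C" "l \<le> h" for k h l
    using that wIndSys_res_orbit[OF C p] by (auto simp: frakR_def min.commute)
qed

lemma nabla_in_fam: "C \<in> wIndSys p n \<Longrightarrow> nabla n C \<in> fam n"
  unfolding fam_def using wIndSys_res_double by (fastforce simp: nabla_def)

lemma Domain_tr_frakR_subset_nabla: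
  assumes "1 < p" "C \<in> wIndSys p n"
  shows "Domain_tr (frakR n C) \<subseteq> nabla n C"
proof
  fix l assume "l \<in> Domain_tr (frakR n C)"
  then obtain k h where "(k, h) \<in> frakR n C" "k < h" "l \<le> k" by (auto simp: Domain_tr_def)
  then have "{#l, l#} \<in> C l"
    using wIndSys_res_double[OF assms(2) wIndSys_proper_orbit_double[OF assms]]
    by (auto simp: frakR_def)
  then show "l \<in> nabla n C" using wIndSys_level_le[OF assms(2)] by (auto simp: nabla_def)
qed

lemma frakR_mono: "C \<le> D \<Longrightarrow> frakR n C \<subseteq> frakR n D"
  by (auto simp: frakR_def le_fun_def)

lemma nabla_mono: "C \<le> D \<Longrightarrow> nabla n C \<subseteq> nabla n D"
  by (auto simp: nabla_def le_fun_def)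

section \<open>The weak indexing system of a sieve\<close>

text \<open>The isomorphism Phi from the fibre over (R, F) onto Sieve n R (Codomain_tr R - F),
  and its inverse.\<close>

definition sieve_of :: "nat \<Rightarrow> nat set \<Rightarrow> (nat \<Rightarrow> nat multiset set) \<Rightarrow> (nat \<times> nat) set" where
  "sieve_of n F C = idR n \<union> {(k, h). k < h \<and> h \<notin> F \<and> {#h, k#} \<in> C h}"

definition indsys_of ::
    "nat \<Rightarrow> (nat \<times> nat) set \<Rightarrow> nat set \<Rightarrow> (nat \<times> nat) set \<Rightarrow> nat \<Rightarrow> nat multiset set" where
  "indsys_of n R F S h = {M. h \<le> n \<and> (\<forall>k\<in>#M. (k, h) \<in> R) \<and>
     (h \<notin> F \<longrightarrow> count M h \<le> 1 \<and> (h \<in># M \<longrightarrow> (\<forall>k\<in>#M. (k, h) \<in> S)))}"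

lemma sieve_of_proper: "(k, h) \<in> sieve_of n F C \<Longrightarrow> k < h \<Longrightarrow> h \<notin> F \<and> {#h, k#} \<in> C h"
  by (auto simp: sieve_of_def idR_def)

lemma sieve_of_mono: "C \<le> D \<Longrightarrow> sieve_of n F C \<subseteq> sieve_of n F D"
  by (auto simp: sieve_of_def le_fun_def)

lemma sieve_of_subset_frakR: "C \<in> wIndSys p n \<Longrightarrow> sieve_of n F C \<subseteq> frakR n C"
  using wIndSys_point wIndSys_orbit wIndSys_level_le
  by (fastforce simp: sieve_of_def idR_def frakR_def)

lemma wIndSys_le_indsys_of:
  assumes C: "C \<in> wIndSys p n"
  shows "C \<le> indsys_of n (frakR n C) (nabla n C) (sieve_of n (nabla n C) C)"
proof (rule le_funI, rule subsetI)
  fix h M assume M: "M \<in> C h"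
  have hn: "h \<le> n" using wIndSys_level_le[OF C M] .
  have "\<forall>k\<in>#M. (k, h) \<in> frakR n C"
    using wIndSys_orbit[OF C M] wIndSys_orbit_le[OF C M] hn by (auto simp: frakR_def)
  moreover have "count M h \<le> 1" if "h \<notin> nabla n C"
  proof (rule ccontr)
    assume "\<not> count M h \<le> 1"
    then have "2 \<le> count M h" by simp
    then have "{#h, h#} \<in> C h" by (rule wIndSys_subset[OF C M double_subseteq_mset])
    then show False using that hn by (simp add: nabla_def)
  qed
  moreover have "(k, h) \<in> sieve_of n (nabla n C) C"
    if "h \<notin> nabla n C" "h \<in># M" "k \<in># M" for k
  proof (cases "k = h")
    case True
    then show ?thesis using hn by (simp add: sieve_of_def idR_def)
  next
    case False
    then have "k < h" using wIndSys_orbit_le[OF C M that(3)] by simp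
    moreover have "{#h, k#} \<in> C h"
      using wIndSys_subset[OF C M pair_subseteq_mset[OF that(2,3)]] False by simp
    ultimately show ?thesis using that(1) by (simp add: sieve_of_def)
  qed
  ultimately show "M \<in> indsys_of n (frakR n C) (nabla n C) (sieve_of n (nabla n C) C) h"
    using hn by (simp add: indsys_of_def)
qed

lemma indsys_of_le_wIndSys:
  assumes p: "1 < p" and C: "C \<in> wIndSys p n" and "R \<subseteq> frakR n C" "F \<subseteq> nabla n C"
    and pairs: "\<And>k h. (k, h) \<in> S \<Longrightarrow> k < h \<Longrightarrow> h \<notin> F \<Longrightarrow> {#h, k#} \<in> C h"
  shows "indsys_of n R F S \<le> C"
proof (rule le_funI, rule subsetI)
  fix h M assume "M \<in> indsys_of n R F S h"
  then have hn: "h \<le> n" and MR: "\<forall>k\<in>#M. (k, h) \<in> R"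
    and nF: "h \<notin> F \<Longrightarrow> count M h \<le> 1 \<and> (h \<in># M \<longrightarrow> (\<forall>k\<in>#M. (k, h) \<in> S))"
    by (auto simp: indsys_of_def)
  have orbits: "\<forall>k\<in>#M. k \<le> h \<and> {#k#} \<in> C h" using MR assms(3) by (auto simp: frakR_def)
  show "M \<in> C h"
  proof (cases "h \<in> F")
    case True
    then have "{#h, h#} \<in> C h" using assms(4) by (auto simp: nabla_def)
    then show ?thesis using wIndSys_all_orbits[OF C] orbits by blast
  next
    case False
    show ?thesis
    proof (rule wIndSys_memI[OF p C hn])
      show "count M h \<le> 1" using nF False by blast
      show "\<forall>k\<in>#M. k \<noteq> h \<longrightarrow> k < h \<and> {#k#} \<in> C h" using orbits by auto
      show "\<forall>k\<in>#M. k \<noteq> h \<longrightarrow> {#h, k#} \<in> C h" if "h \<in># M"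
      proof (intro ballI impI)
        fix k assume "k \<in># M" "k \<noteq> h"
        then have "(k, h) \<in> S" "k < h" using nF False that orbits by auto
        then show "{#h, k#} \<in> C h" using pairs False by blast
      qed
    qed
  qed
qed

lemma indsys_of_eq_wIndSys:
  assumes "1 < p" "C \<in> wIndSys p n"
  shows "indsys_of n (frakR n C) (nabla n C) (sieve_of n (nabla n C) C) = C"
proof (rule antisym)
  show "indsys_of n (frakR n C) (nabla n C) (sieve_of n (nabla n C) C) \<le> C"
    by (rule indsys_of_le_wIndSys[OF assms order_refl order_refl]) (simp add: sieve_of_proper)
  show "C \<le> indsys_of n (frakR n C) (nabla n C) (sieve_of n (nabla n C) C)"
    by (rule wIndSys_le_indsys_of[OF assms(2)])
qed

lemma sieve_of_in_Sieve:
  assumes p: "1 < p" and C: "C \<in> wIndSys p n"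
  shows "sieve_of n (nabla n C) C \<in> Sieve n (frakR n C) (Codomain_tr (frakR n C) - nabla n C)"
    (is "?S \<in> Sieve n ?R (Codomain_tr ?R - ?F)")
proof (rule SieveI)
  show "idR n \<subseteq> ?S" by (simp add: sieve_of_def)
  show SR: "?S \<subseteq> ?R" by (rule sieve_of_subset_frakR[OF C])
  show "h \<in> Codomain_tr ?R - ?F" if "(k, h) \<in> ?S" "k < h" for k h
    using that SR sieve_of_proper[OF that] by (auto simp: Codomain_tr_def)
  show "(j, h) \<in> ?S" if "(j, k) \<in> ?R" "(k, h) \<in> ?S" "k < h" for j k h
  proof -
    have "h \<notin> ?F" "{#h, k#} \<in> C h" using sieve_of_proper[OF that(2,3)] by auto
    moreover have "{#h, j#} \<in> C h"
      using wIndSys_pair_trans[OF C \<open>{#h, k#} \<in> C h\<close>] that(1) by (simp add: frakR_def)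
    moreover have "j < h" using that(1,3) by (simp add: frakR_def)
    ultimately show ?thesis by (simp add: sieve_of_def)
  qed
  show "(min l k, l) \<in> ?S" if kh: "(k, h) \<in> ?S" and lh: "l \<le> h"
    and l: "l \<in> Codomain_tr ?R - ?F" for k h l
  proof (cases "k < h")
    case False
    then have "k = h" "h \<le> n" using kh SR by (auto simp: frakR_def)
    then show ?thesis using lh by (simp add: sieve_of_def idR_def min_absorb1)
  next
    case True
    have "k \<in> ?F"
      using Domain_tr_frakR_subset_nabla[OF p C] kh SR True by (auto simp: Domain_tr_def)
    then have "\<not> l \<le> k" using l fam_downward[OF nabla_in_fam[OF C]] by blast
    moreover have "{#h, k#} \<in> C h" using sieve_of_proper[OF kh True] by blast
    ultimately have "{#l, k#} \<in> C l"
      using wIndSys_res_pair[OF C less_trans[OF zero_less_one p]] lh by simp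
    then show ?thesis using \<open>\<not> l \<le> k\<close> l by (simp add: sieve_of_def min_absorb2)
  qed
qed

lemma indsys_of_res:
  assumes p: "0 < p" and R: "R \<in> transf n" and F: "F \<in> fam n" and DF: "Domain_tr R \<subseteq> F"
    and S: "S \<in> Sieve n R (Codomain_tr R - F)"
    and M: "M \<in> indsys_of n R F S h" and lh: "l \<le> h"
  shows "res p h l M \<in> indsys_of n R F S l"
proof -
  from M have hn: "h \<le> n" and MR: "\<forall>k\<in>#M. (k, h) \<in> R"
    and nF: "h \<notin> F \<Longrightarrow> count M h \<le> 1 \<and> (h \<in># M \<longrightarrow> (\<forall>k\<in>#M. (k, h) \<in> S))"
    by (auto simp: indsys_of_def)
  have proper: "k < h" if "k \<in># M" "k \<noteq> h" for k
    using MR transf_le[OF R] that by (meson le_neq_implies_less)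
  have orbits: "\<forall>j\<in>#res p h l M. (j, l) \<in> R"
    using MR transf_restrict[OF R _ lh] by (auto simp: mem_res_iff[OF p] min.commute)
  have "count (res p h l M) l \<le> 1 \<and> (l \<in># res p h l M \<longrightarrow> (\<forall>j\<in>#res p h l M. (j, l) \<in> S))"
    if lF: "l \<notin> F"
  proof -
    have hF: "h \<notin> F" using fam_downward[OF F _ lh] lF by blast
    txt \<open>Proper orbits of M lie in Domain(R), hence in F, hence strictly below l.\<close>
    have "\<not> l \<le> k" if "k \<in># M" "k \<noteq> h" for k
    proof -
      have "k \<in> F" using DF MR that proper[OF that] by (auto simp: Domain_tr_def)
      then show ?thesis using fam_downward[OF F] lF by blast
    qed
    then have cnt: "count (res p h l M) l = count M h"
      using count_res_self[OF lh] by blast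
    have "(j, l) \<in> S" if l_in: "l \<in># res p h l M" and j_in: "j \<in># res p h l M" for j
    proof -
      have "h \<in># M" using l_in cnt by (metis count_eq_zero_iff)
      then have MS: "\<forall>k\<in>#M. (k, h) \<in> S" using nF hF by blast
      obtain k where k: "k \<in># M" "j = min l k" using j_in mem_res_iff[OF p] by blast
      show ?thesis
      proof (cases "k = h")
        case True
        then show ?thesis using k lh hn Sieve_refl[OF S] by (simp add: min_absorb1)
      next
        case False
        then have "l \<in> Codomain_tr R" using MR k proper lh by (auto simp: Codomain_tr_def)
        then show ?thesis using Sieve_restrict[OF S _ lh] MS k lF by blast
      qed
    qed
    then show ?thesis using cnt nF hF by auto
  qed
  then show ?thesis using orbits hn lh by (simp add: indsys_of_def)
qed

lemma mem_sum_list_map_snd: "j \<in># sum_list (map snd xs) \<longleftrightarrow> (\<exists>(k, T)\<in>set xs. j \<in># T)"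
  by (induction xs) auto

lemma count_sum_list_map_snd_le:
  "\<forall>(k, T)\<in>set xs. count T h \<le> (if k = h then 1 else 0) \<Longrightarrow>
   count (sum_list (map snd xs)) h \<le> count (mset (map fst xs)) h"
  by (induction xs) auto

lemma snd_unique_if_count_fst_le_1:
  "count (mset (map fst xs)) h \<le> 1 \<Longrightarrow> (h, T) \<in> set xs \<Longrightarrow> (h, T') \<in> set xs \<Longrightarrow> T = T'"
proof (induction xs)
  case (Cons x xs)
  show ?case
  proof (cases "fst x = h")
    case True
    then have "count (mset (map fst xs)) h = 0" using Cons.prems(1) by (cases x) simp
    then have "h \<notin> set (map fst xs)" by (simp only: count_mset_0_iff simp_thms)
    then have "(h, T) \<notin> set xs" "(h, T') \<notin> set xs" by force+
    then show ?thesis using Cons.prems by auto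
  next
    case False
    then show ?thesis using Cons by (cases x) auto
  qed
qed simp

lemma indsys_of_coprod:
  assumes R: "R \<in> transf n" and S: "S \<in> Sieve n R X"
    and X: "mset (map fst xs) \<in> indsys_of n R F S h"
    and T: "\<forall>(k, T)\<in>set xs. T \<in> indsys_of n R F S k"
  shows "sum_list (map snd xs) \<in> indsys_of n R F S h"
proof -
  let ?N = "sum_list (map snd xs)"
  have hn: "h \<le> n" using X by (simp add: indsys_of_def)
  have XR: "(k, h) \<in> R" if "(k, T) \<in> set xs" for k T
    using X that by (force simp: indsys_of_def)
  have TR: "(j, k) \<in> R" if "(k, T) \<in> set xs" "j \<in># T" for k T j
    using T that by (force simp: indsys_of_def)
  have orbits: "\<forall>j\<in>#?N. (j, h) \<in> R"
    using XR TR transf_trans[OF R] by (fastforce simp: mem_sum_list_map_snd)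
  have "count ?N h \<le> 1 \<and> (h \<in># ?N \<longrightarrow> (\<forall>j\<in>#?N. (j, h) \<in> S))" if hF: "h \<notin> F"
  proof -
    have cX: "count (mset (map fst xs)) h \<le> 1" using X hF by (simp add: indsys_of_def)
    have XS: "(k, h) \<in> S" if "h \<in># mset (map fst xs)" "(k, T) \<in> set xs" for k T
      using X hF that by (force simp: indsys_of_def)
    txt \<open>Only the summand indexed by h, which is unique, can contain fixed points.\<close>
    have no_h: "h \<notin># T" if "(k, T) \<in> set xs" "k \<noteq> h" for k T
      using XR[OF that(1)] TR[OF that(1)] transf_le[OF R] that(2) by (meson le_antisym)
    have "count ?N h \<le> count (mset (map fst xs)) h"
      using no_h T hF by (intro count_sum_list_map_snd_le) (auto simp: indsys_of_def not_in_iff)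
    with cX have cnt: "count ?N h \<le> 1" by linarith
    have "(j, h) \<in> S" if h_in: "h \<in># ?N" and j_in: "j \<in># ?N" for j
    proof -
      obtain T0 where T0: "(h, T0) \<in> set xs" "h \<in># T0"
        using h_in no_h by (fastforce simp: mem_sum_list_map_snd)
      obtain k T where kT: "(k, T) \<in> set xs" "j \<in># T"
        using j_in by (auto simp: mem_sum_list_map_snd)
      have hX: "h \<in># mset (map fst xs)" using T0(1) by force
      show ?thesis
      proof (cases "k = h")
        case True
        then have "T = T0" using snd_unique_if_count_fst_le_1[OF cX] kT(1) T0(1) by blast
        then show ?thesis using T T0 kT hF by (force simp: indsys_of_def)
      next
        case False
        then have "k < h" using XR[OF kT(1)] transf_le[OF R] by (meson le_neq_implies_less)
        then show ?thesis using Sieve_precomp[OF S TR[OF kT] XS[OF hX kT(1)]] by blast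
      qed
    qed
    with cnt show ?thesis by blast
  qed
  with orbits hn show ?thesis by (simp add: indsys_of_def)
qed

lemma indsys_of_in_wIndSys:
  assumes p: "0 < p" and R: "R \<in> transf n" and F: "F \<in> fam n" and DF: "Domain_tr R \<subseteq> F"
    and S: "S \<in> Sieve n R (Codomain_tr R - F)"
  shows "indsys_of n R F S \<in> wIndSys p n"
  unfolding wIndSys_def
proof (intro CollectI conjI allI impI)
  let ?D = "indsys_of n R F S"
  show "?D h = {}" if "n < h" for h
    using that by (simp add: indsys_of_def)
  show "?D h \<subseteq> hset h" if "h \<le> n" for h
    using transf_le[OF R] by (auto simp: indsys_of_def hset_def)
  show "res p h l M \<in> ?D l" if "h \<le> n" "l \<le> h" "M \<in> ?D h" for h l M
    using indsys_of_res[OF p R F DF S that(3,2)] .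
  show "{#h#} \<in> ?D h" if "h \<le> n" for h
    using that transf_refl[OF R] Sieve_refl[OF S] by (simp add: indsys_of_def)
  show "sum_list (map (\<lambda>(k, T). ind T) xs) \<in> ?D h"
    if "h \<le> n" "mset (map fst xs) \<in> ?D h" "\<forall>(k, T)\<in>set xs. T \<in> ?D k" for h xs
  proof -
    have "map (\<lambda>(k, T). ind T) xs = map snd xs" by (auto simp: ind_def)
    with indsys_of_coprod[OF R S that(2,3)] show ?thesis by (simp only:)
  qed
  show "M \<in> ?D h" "M' \<in> ?D h" if "h \<le> n" "M + M' \<in> ?D h" for h M M'
    using that by (auto simp: indsys_of_def)
qed

lemma frakR_indsys_of:
  assumes "R \<in> transf n" "S \<in> Sieve n R X"
  shows "frakR n (indsys_of n R F S) = R"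
  using transf_le[OF assms(1)] Sieve_refl[OF assms(2)]
  by (auto simp: frakR_def indsys_of_def)

lemma nabla_indsys_of:
  assumes "R \<in> transf n" "F \<in> fam n"
  shows "nabla n (indsys_of n R F S) = F"
  using transf_refl[OF assms(1)] fam_le[OF assms(2)] by (auto simp: nabla_def indsys_of_def)

lemma sieve_of_indsys_of:
  assumes R: "R \<in> transf n" and S: "S \<in> Sieve n R (Codomain_tr R - F)"
  shows "sieve_of n F (indsys_of n R F S) = S"
proof -
  have "(k, h) \<in> sieve_of n F (indsys_of n R F S) \<longleftrightarrow> (k, h) \<in> S" for k h
  proof (cases "k < h")
    case True
    have "(k, h) \<in> S \<Longrightarrow> h \<notin> F \<and> (k, h) \<in> R \<and> h \<le> n"
      using Sieve_proper[OF S _ True] Sieve_subset[OF S] transf_le[OF R] by auto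
    then show ?thesis
      using True transf_refl[OF R] Sieve_refl[OF S]
      by (auto simp: sieve_of_def indsys_of_def idR_def)
  next
    case False
    then show ?thesis
      using Sieve_subset[OF S] transf_le[OF R] Sieve_refl[OF S]
      by (fastforce simp: sieve_of_def idR_def)
  qed
  then show ?thesis by auto
qed

lemma indsys_of_mono:
  assumes "R \<subseteq> R'" "F \<subseteq> F'" "\<And>k h. (k, h) \<in> S \<Longrightarrow> h \<notin> F' \<Longrightarrow> (k, h) \<in> S'"
  shows "indsys_of n R F S \<le> indsys_of n R' F' S'"
  using assms by (auto simp: indsys_of_def le_fun_def)

section \<open>Fibres\<close>

lemma fib_memD:
  assumes "1 < p" "C \<in> fib p n R F"
  shows "R \<in> transf n" "F \<in> fam n" "Domain_tr R \<subseteq> F"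
proof -
  have C: "C \<in> wIndSys p n" and "frakR n C = R" "nabla n C = F"
    using assms(2) by (auto simp: fib_def)
  then show "R \<in> transf n" "F \<in> fam n" "Domain_tr R \<subseteq> F"
    using frakR_in_transf[OF C less_trans[OF zero_less_one assms(1)]] nabla_in_fam[OF C]
      Domain_tr_frakR_subset_nabla[OF assms(1) C] by simp_all
qed

lemma indsys_of_in_fib:
  assumes "0 < p" "R \<in> transf n" "F \<in> fam n" "Domain_tr R \<subseteq> F"
    "S \<in> Sieve n R (Codomain_tr R - F)"
  shows "indsys_of n R F S \<in> fib p n R F"
  using indsys_of_in_wIndSys[OF assms] frakR_indsys_of[OF assms(2,5)] nabla_indsys_of[OF assms(2,3)]
  by (simp add: fib_def)

lemma indsys_of_sieve_of_fib:
  assumes "1 < p" "C \<in> fib p n R F"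
  shows "indsys_of n R F (sieve_of n F C) = C"
  using indsys_of_eq_wIndSys[OF assms(1)] assms(2) by (auto simp: fib_def)

lemma sieve_of_fib_in_Sieve:
  assumes "1 < p" "C \<in> fib p n R F"
  shows "sieve_of n F C \<in> Sieve n R (Codomain_tr R - F)"
  using sieve_of_in_Sieve[OF assms(1)] assms(2) by (auto simp: fib_def)

lemma bij_betw_sieve_of_fib:
  assumes "1 < p" "R \<in> transf n" "F \<in> fam n" "Domain_tr R \<subseteq> F"
  shows "bij_betw (sieve_of n F) (fib p n R F) (Sieve n R (Codomain_tr R - F))"
proof (rule bij_betw_byWitness[where f' = "indsys_of n R F"])
  show "\<forall>C\<in>fib p n R F. indsys_of n R F (sieve_of n F C) = C"
    using indsys_of_sieve_of_fib[OF assms(1)] by blast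
  show "\<forall>S\<in>Sieve n R (Codomain_tr R - F). sieve_of n F (indsys_of n R F S) = S"
    using sieve_of_indsys_of[OF assms(2)] by blast
  show "sieve_of n F ` fib p n R F \<subseteq> Sieve n R (Codomain_tr R - F)"
    using sieve_of_fib_in_Sieve[OF assms(1)] by blast
  show "indsys_of n R F ` Sieve n R (Codomain_tr R - F) \<subseteq> fib p n R F"
    using indsys_of_in_fib[OF less_trans[OF zero_less_one assms(1)] assms(2-4)] by blast
qed

lemma fib_le_iff_sieve_of_subset:
  assumes "1 < p" "C \<in> fib p n R F" "D \<in> fib p n R F"
  shows "C \<le> D \<longleftrightarrow> sieve_of n F C \<subseteq> sieve_of n F D"
proof
  assume "C \<le> D"
  then show "sieve_of n F C \<subseteq> sieve_of n F D" by (rule sieve_of_mono)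
next
  assume "sieve_of n F C \<subseteq> sieve_of n F D"
  then have "indsys_of n R F (sieve_of n F C) \<le> indsys_of n R F (sieve_of n F D)"
    by (intro indsys_of_mono) auto
  then show "C \<le> D" using indsys_of_sieve_of_fib[OF assms(1)] assms(2,3) by simp
qed

lemma fib_eq_empty: "1 < p \<Longrightarrow> \<not> Domain_tr R \<subseteq> F \<Longrightarrow> fib p n R F = {}"
  using fib_memD(3) by blast

lemma fib_ex1:
  assumes "1 < p" "R \<in> transf n" "F \<in> fam n" "Codomain_tr R \<subseteq> F"
  shows "\<exists>!C. C \<in> fib p n R F"
proof -
  have DF: "Domain_tr R \<subseteq> F" using Domain_tr_subset_Codomain_tr assms(4) by blast
  have "Codomain_tr R - F = {}" using assms(4) by blast
  then have "Sieve n R (Codomain_tr R - F) = {idR n}" by (simp only: Sieve_empty[OF assms(2)])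
  then have "bij_betw (sieve_of n F) (fib p n R F) {idR n}"
    using bij_betw_sieve_of_fib[OF assms(1-3) DF] by simp
  then have "card (fib p n R F) = Suc 0" by (simp add: bij_betw_same_card)
  then obtain C where "fib p n R F = {C}" by (auto simp: card_1_singleton_iff)
  then show ?thesis by auto
qed

section \<open>Cocartesian transport\<close>

lemma mem_restrictS_transportR:
  "(j, h) \<in> restrictS n X (transportR n R' S) \<longleftrightarrow>
     (j = h \<and> h \<le> n) \<or> (h \<in> X \<and> (\<exists>k. j \<le> k \<and> k < h \<and> (j, k) \<in> R' \<and> (k, h) \<in> S))"
  by (auto simp: restrictS_def transportR_def idR_def)

lemma restrictS_transportR_restrict:
  assumes F': "F' \<in> fam n" and FF': "F \<subseteq> F'" and DF: "Domain_tr R \<subseteq> F"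
    and S: "S \<in> Sieve n R (Codomain_tr R - F)"
    and jh: "(j, h) \<in> restrictS n (- F') (transportR n R' S)" and lh: "l \<le> h" and lF': "l \<notin> F'"
  shows "(min l j, l) \<in> restrictS n (- F') (transportR n R' S)"
proof (cases "j = h")
  case True
  then show ?thesis using jh lh by (auto simp: mem_restrictS_transportR min_absorb1)
next
  case False
  then obtain k where k: "j \<le> k" "k < h" "(j, k) \<in> R'" "(k, h) \<in> S"
    using jh by (auto simp: mem_restrictS_transportR)
  have kR: "(k, h) \<in> R" using Sieve_subset[OF S] k(4) by blast
  then have "k \<in> F'" using DF FF' k(2) by (auto simp: Domain_tr_def)
  then have "k < l" using lF' fam_downward[OF F'] by (meson not_le)
  have "l \<in> Codomain_tr R - F" using kR k(2) lh lF' FF' by (auto simp: Codomain_tr_def)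
  then have "(k, l) \<in> S"
    using Sieve_restrict[OF S k(4) lh] \<open>k < l\<close> by (simp add: min_absorb2)
  then show ?thesis
    using k(1,3) \<open>k < l\<close> lF' by (auto simp: mem_restrictS_transportR min_absorb2)
qed

lemma restrictS_transportR_in_Sieve:
  assumes R': "R' \<in> transf n" and F': "F' \<in> fam n" and "R \<subseteq> R'" "F \<subseteq> F'"
    and DF: "Domain_tr R \<subseteq> F" and S: "S \<in> Sieve n R (Codomain_tr R - F)"
  shows "restrictS n (- F') (transportR n R' S) \<in> Sieve n R' (Codomain_tr R' - F')"
    (is "?S' \<in> _")
proof (rule SieveI)
  have SR': "S \<subseteq> R'" using Sieve_subset[OF S] assms(3) by blast
  show "idR n \<subseteq> ?S'" by (auto simp: restrictS_def transportR_def)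
  show "?S' \<subseteq> R'"
  proof
    fix x assume "x \<in> ?S'"
    moreover obtain j h where "x = (j, h)" by fastforce
    ultimately have "(j = h \<and> h \<le> n) \<or> (\<exists>k. (j, k) \<in> R' \<and> (k, h) \<in> R')"
      using SR' by (auto simp: mem_restrictS_transportR)
    then show "x \<in> R'"
      using transf_refl[OF R'] transf_trans[OF R'] \<open>x = (j, h)\<close> by blast
  qed
  show "h \<in> Codomain_tr R' - F'" if "(j, h) \<in> ?S'" "j < h" for j h
    using that SR' by (auto simp: mem_restrictS_transportR Codomain_tr_def)
  show "(i, h) \<in> ?S'" if ij: "(i, j) \<in> R'" and jh: "(j, h) \<in> ?S'" and "j < h" for i j h
  proof -
    obtain k where k: "h \<notin> F'" "j \<le> k" "k < h" "(j, k) \<in> R'" "(k, h) \<in> S"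
      using jh \<open>j < h\<close> by (auto simp: mem_restrictS_transportR)
    moreover have "(i, k) \<in> R'" using transf_trans[OF R' ij k(4)] .
    moreover have "i \<le> k" using transf_le[OF R' ij] k(2) by simp
    ultimately show ?thesis by (auto simp: mem_restrictS_transportR)
  qed
  show "(min l j, l) \<in> ?S'" if "(j, h) \<in> ?S'" "l \<le> h" "l \<in> Codomain_tr R' - F'" for j h l
    using restrictS_transportR_restrict[OF F' assms(4) DF S that(1,2)] that(3) by blast
qed

lemma restrictS_transportR_eq_transportR:
  "(\<And>k h. (k, h) \<in> S \<Longrightarrow> k < h \<Longrightarrow> h \<notin> F) \<Longrightarrow>
   restrictS n (- F) (transportR n R' S) = transportR n R' S"
  by (auto simp: restrictS_def transportR_def)

lemma restrictS_transportR_self: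
  assumes R: "R \<in> transf n" and S: "S \<in> Sieve n R (Codomain_tr R - F)"
  shows "restrictS n (- F') (transportR n R S) = restrictS n (Codomain_tr R - F') S"
proof -
  have "(j, h) \<in> restrictS n (- F') (transportR n R S) \<longleftrightarrow>
      (j, h) \<in> restrictS n (Codomain_tr R - F') S" for j h
  proof
    assume "(j, h) \<in> restrictS n (- F') (transportR n R S)"
    then have "(j = h \<and> h \<le> n) \<or> (h \<notin> F' \<and> (\<exists>k. k < h \<and> (j, k) \<in> R \<and> (k, h) \<in> S))"
      by (auto simp: mem_restrictS_transportR)
    then show "(j, h) \<in> restrictS n (Codomain_tr R - F') S"
      using Sieve_precomp[OF S] Sieve_proper[OF S] by (auto simp: restrictS_def idR_def)
  next
    assume jh: "(j, h) \<in> restrictS n (Codomain_tr R - F') S"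
    show "(j, h) \<in> restrictS n (- F') (transportR n R S)"
    proof (cases "j = h")
      case True
      then show ?thesis using jh Sieve_subset[OF S] transf_le[OF R]
        by (auto simp: mem_restrictS_transportR restrictS_def idR_def)
    next
      case False
      then have "(j, h) \<in> S" "h \<notin> F'" using jh by (auto simp: restrictS_def idR_def)
      moreover have "j < h"
        using \<open>(j, h) \<in> S\<close> False Sieve_subset[OF S] transf_le[OF R] by fastforce
      moreover have "(j, j) \<in> R" using transf_refl[OF R] transf_le[OF R] Sieve_subset[OF S]
        \<open>(j, h) \<in> S\<close> by (meson le_trans subsetD)
      ultimately show ?thesis by (auto simp: mem_restrictS_transportR)
    qed
  qed
  then show ?thesis by auto
qed

lemma indsys_of_le_indsys_of_transport:
  assumes R: "R \<in> transf n" and R': "R' \<in> transf n" and "R \<subseteq> R'" "F \<subseteq> F'"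
    and S: "S \<in> Sieve n R X"
  shows "indsys_of n R F S \<le> indsys_of n R' F' (restrictS n (- F') (transportR n R' S))"
proof (rule indsys_of_mono[OF assms(3,4)])
  fix k h assume kh: "(k, h) \<in> S" and hF': "h \<notin> F'"
  have "k \<le> h" "h \<le> n" using kh Sieve_subset[OF S] transf_le[OF R] by auto
  then show "(k, h) \<in> restrictS n (- F') (transportR n R' S)"
    using kh hF' transf_refl[OF R'] by (cases "k = h") (auto simp: mem_restrictS_transportR)
qed

lemma indsys_of_transport_le_wIndSys:
  assumes p: "1 < p" and Y: "Y \<in> wIndSys p n" "R' \<subseteq> frakR n Y" "F' \<subseteq> nabla n Y"
    and CY: "C \<le> Y"
  shows "indsys_of n R' F' (restrictS n (- F') (transportR n R' (sieve_of n F C))) \<le> Y"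
proof (rule indsys_of_le_wIndSys[OF p Y])
  fix j h
  assume "(j, h) \<in> restrictS n (- F') (transportR n R' (sieve_of n F C))" "j < h" "h \<notin> F'"
  then obtain k where k: "(j, k) \<in> R'" "k < h" "(k, h) \<in> sieve_of n F C"
    by (auto simp: mem_restrictS_transportR)
  have "{#h, k#} \<in> Y h" using sieve_of_proper[OF k(3,2)] CY by (auto simp: le_fun_def)
  moreover have "{#j#} \<in> Y k" using k(1) Y(2) by (auto simp: frakR_def)
  ultimately show "{#h, j#} \<in> Y h" by (rule wIndSys_pair_trans[OF Y(1)])
qed

text \<open>The two transports of the theorem are the cases F' = F and R' = R.\<close>

lemma fib_cocart_lift:
  assumes p: "1 < p" and C: "C \<in> fib p n R F" and R': "R' \<in> transf n" and F': "F' \<in> fam n"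
    and RR': "R \<subseteq> R'" and FF': "F \<subseteq> F'" and DF': "Domain_tr R' \<subseteq> F'"
  obtains D where "D \<in> fib p n R' F'"
    and "sieve_of n F' D = restrictS n (- F') (transportR n R' (sieve_of n F C))"
    and "cocart_lift (wIndSys p n) (\<le>) leTF (\<lambda>C. (frakR n C, nabla n C)) C (R', F') D"
proof -
  have R: "R \<in> transf n" and DF: "Domain_tr R \<subseteq> F" using fib_memD[OF p C] by simp_all
  have S: "sieve_of n F C \<in> Sieve n R (Codomain_tr R - F)" by (rule sieve_of_fib_in_Sieve[OF p C])
  define S' where "S' = restrictS n (- F') (transportR n R' (sieve_of n F C))"
  define D where "D = indsys_of n R' F' S'"
  have S': "S' \<in> Sieve n R' (Codomain_tr R' - F')"
    unfolding S'_def by (rule restrictS_transportR_in_Sieve[OF R' F' RR' FF' DF S])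
  have D: "D \<in> fib p n R' F'"
    unfolding D_def by (rule indsys_of_in_fib[OF less_trans[OF zero_less_one p] R' F' DF' S'])
  have "C \<le> D"
    using indsys_of_le_indsys_of_transport[OF R R' RR' FF' S]
    unfolding D_def S'_def indsys_of_sieve_of_fib[OF p C] .
  moreover have "D \<le> Y"
    if "Y \<in> wIndSys p n" "R' \<subseteq> frakR n Y" "F' \<subseteq> nabla n Y" "C \<le> Y" for Y
    unfolding D_def S'_def using indsys_of_transport_le_wIndSys[OF p that] .
  ultimately have "cocart_lift (wIndSys p n) (\<le>) leTF (\<lambda>C. (frakR n C, nabla n C)) C (R', F') D"
    using D by (auto simp: cocart_lift_def leTF_def fib_def intro: order_trans)
  moreover have "sieve_of n F' D = S'"
    unfolding D_def by (rule sieve_of_indsys_of[OF R' S'])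
  ultimately show thesis using that D unfolding S'_def by blast
qed

lemma cocart_fib_frakR_nabla:
  assumes p: "1 < p"
  shows "cocart_fib (wIndSys p n) (\<le>) ((\<lambda>C. (frakR n C, nabla n C)) ` wIndSys p n) leTF
           (\<lambda>C. (frakR n C, nabla n C))"
  unfolding cocart_fib_def
proof (intro conjI ballI impI)
  let ?\<pi> = "\<lambda>C. (frakR n C, nabla n C)"
  show "?\<pi> C \<in> ?\<pi> ` wIndSys p n" if "C \<in> wIndSys p n" for C
    using that by blast
  show "leTF (?\<pi> C) (?\<pi> D)" if "C \<in> wIndSys p n" "D \<in> wIndSys p n" "C \<le> D" for C D
    using frakR_mono[OF that(3)] nabla_mono[OF that(3)] by (simp add: leTF_def)
  show "\<exists>t. cocart_lift (wIndSys p n) (\<le>) leTF ?\<pi> C q' t"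
    if "q \<in> ?\<pi> ` wIndSys p n" and q': "q' \<in> ?\<pi> ` wIndSys p n" and le: "leTF q q'"
      and C: "C \<in> wIndSys p n" and q: "?\<pi> C = q"
    for q q' C
  proof -
    obtain C' where C': "C' \<in> wIndSys p n" "q' = ?\<pi> C'" using q' by blast
    have C_fib: "C \<in> fib p n (frakR n C) (nabla n C)"
      and C'_fib: "C' \<in> fib p n (frakR n C') (nabla n C')"
      using C C'(1) by (simp_all add: fib_def)
    have "frakR n C \<subseteq> frakR n C'" "nabla n C \<subseteq> nabla n C'"
      using le q C'(2) by (auto simp: leTF_def)
    then obtain t where "cocart_lift (wIndSys p n) (\<le>) leTF ?\<pi> C (frakR n C', nabla n C') t"
      using fib_cocart_lift[OF p C_fib fib_memD(1,2)[OF p C'_fib] _ _ fib_memD(3)[OF p C'_fib]]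
      by metis
    then show ?thesis using C'(2) by blast
  qed
qed

lemma fib_transport_transf:
  assumes p: "1 < p" and C: "C \<in> fib p n R F" and R': "R' \<in> transf n"
    and RR': "R \<subseteq> R'" and DF: "Domain_tr R' \<subseteq> F"
  shows "\<exists>D\<in>fib p n R' F. sieve_of n F D = transportR n R' (sieve_of n F C) \<and>
           cocart_lift (wIndSys p n) (\<le>) leTF (\<lambda>C. (frakR n C, nabla n C)) C (R', F) D"
proof -
  have eq: "restrictS n (- F) (transportR n R' (sieve_of n F C)) = transportR n R' (sieve_of n F C)"
    using sieve_of_proper by (intro restrictS_transportR_eq_transportR) blast
  obtain D where "D \<in> fib p n R' F"
    "sieve_of n F D = restrictS n (- F) (transportR n R' (sieve_of n F C))"
    "cocart_lift (wIndSys p n) (\<le>) leTF (\<lambda>C. (frakR n C, nabla n C)) C (R', F) D"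
    by (rule fib_cocart_lift[OF p C R' fib_memD(2)[OF p C] RR' order_refl DF])
  with eq show ?thesis by auto
qed

lemma fib_transport_fam:
  assumes p: "1 < p" and C: "C \<in> fib p n R F" and F': "F' \<in> fam n" and FF': "F \<subseteq> F'"
  shows "\<exists>D\<in>fib p n R F'. sieve_of n F' D = restrictS n (Codomain_tr R - F') (sieve_of n F C) \<and>
           cocart_lift (wIndSys p n) (\<le>) leTF (\<lambda>C. (frakR n C, nabla n C)) C (R, F') D"
proof -
  note R = fib_memD(1)[OF p C]
  have DF': "Domain_tr R \<subseteq> F'" using fib_memD(3)[OF p C] FF' by blast
  have eq: "restrictS n (- F') (transportR n R (sieve_of n F C)) =
      restrictS n (Codomain_tr R - F') (sieve_of n F C)"
    by (rule restrictS_transportR_self[OF R sieve_of_fib_in_Sieve[OF p C]])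
  obtain D where "D \<in> fib p n R F'"
    "sieve_of n F' D = restrictS n (- F') (transportR n R (sieve_of n F C))"
    "cocart_lift (wIndSys p n) (\<le>) leTF (\<lambda>C. (frakR n C, nabla n C)) C (R, F') D"
    by (rule fib_cocart_lift[OF p C R F' order_refl FF' DF'])
  with eq show ?thesis by auto
qed

theorem corollaryC:
  fixes p n :: nat
  assumes "prime p"
  shows
   "(\<forall>C\<in>wIndSys p n. frakR n C \<in> transf n \<and> nabla n C \<in> fam n) \<and>
    (\<forall>R\<in>transf n. \<forall>F\<in>fam n. \<not> Domain_tr R \<subseteq> F \<longrightarrow> fib p n R F = {}) \<and>
    (\<forall>R\<in>transf n. \<forall>F\<in>fam n. Codomain_tr R \<subseteq> F \<longrightarrow> (\<exists>!C. C \<in> fib p n R F)) \<and>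
    (\<exists>\<Phi>. (\<forall>R\<in>transf n. \<forall>F\<in>fam n. Domain_tr R \<subseteq> F \<longrightarrow>
              bij_betw (\<Phi> R F) (fib p n R F) (Sieve n R (Codomain_tr R - F)) \<and>
              (\<forall>C\<in>fib p n R F. \<forall>D\<in>fib p n R F. C \<le> D \<longleftrightarrow> \<Phi> R F C \<subseteq> \<Phi> R F D)) \<and>
          cocart_fib (wIndSys p n) (\<le>) ((\<lambda>C. (frakR n C, nabla n C)) ` wIndSys p n) leTF
                     (\<lambda>C. (frakR n C, nabla n C)) \<and>
          (\<forall>R\<in>transf n. \<forall>R'\<in>transf n. \<forall>F\<in>fam n. R \<subseteq> R' \<longrightarrow> Domain_tr R' \<subseteq> F \<longrightarrow>
              (\<forall>C\<in>fib p n R F. \<exists>D\<in>fib p n R' F.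
                  \<Phi> R' F D = transportR n R' (\<Phi> R F C) \<and>
                  cocart_lift (wIndSys p n) (\<le>) leTF (\<lambda>C. (frakR n C, nabla n C)) C (R', F) D)) \<and>
          (\<forall>R\<in>transf n. \<forall>F\<in>fam n. \<forall>F'\<in>fam n. F \<subseteq> F' \<longrightarrow> Domain_tr R \<subseteq> F \<longrightarrow>
              (\<forall>C\<in>fib p n R F. \<exists>D\<in>fib p n R F'.
                  \<Phi> R F' D = restrictS n (Codomain_tr R - F') (\<Phi> R F C) \<and>
                  cocart_lift (wIndSys p n) (\<le>) leTF (\<lambda>C. (frakR n C, nabla n C)) C (R, F') D)))"
proof -
  have p: "1 < p" using assms by (rule prime_gt_1_nat)
  show ?thesis
    by (intro conjI exI[of _ "\<lambda>R F. sieve_of n F"] ballI impI;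
        (rule frakR_in_transf[OF _ less_trans[OF zero_less_one p]] nabla_in_fam
           fib_eq_empty[OF p] fib_ex1[OF p] bij_betw_sieve_of_fib[OF p]
           fib_le_iff_sieve_of_subset[OF p] cocart_fib_frakR_nabla[OF p]
           fib_transport_transf[OF p] fib_transport_fam[OF p]; assumption))
qed

end
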